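(* Let $f,g$ be complex-valued functions of two variables with $f\perp g$ and $g(x,y)=-g(y,x)$ for all $x,y$. Let $\{a_i\}_{i\in\mathbb{Z}},\{b_i\}_{i\in\mathbb{Z}}$ be sequences and $m\ge0$, $n\ge1$ integers such that all quantities $f(a_j,b_m)$, $g(b_j,b_m)$ ($j\ne m$), $f(a_j,b_{-n})$ and $g(b_j,b_{-n})$ ($j\neq -n$) with $-n\le j\le m$ are nonzero. Then $$\sum_{k=-n}^{m}f(a_k,b_k)\frac{\prod_{j=m}^{k-1}g(b_j,b_m)}{\prod_{j=m}^{k}f(a_j,b_m)}\frac{\prod_{j=1}^{k-1}f(a_j,b_{-n})}{\prod_{j=1}^{k}g(b_j,b_{-n})}=0.$$
   Context: $f\perp g$ means $g(u,v)f(z,w)-g(u,w)f(z,v)+g(v,w)f(z,u)=0$ for all $u,v,w,z$. Products over integer ranges follow the convention: $\prod_{j=k}^{m}A_j=A_k\cdots A_m$ if $m\ge k$; $=1$ if $m=k-1$; $=(A_{m+1}\cdots A_{k-1})^{-1}$ if $m\le k-2$. *)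

theory Defs
  imports Complex_Main
begin

definition perp :: "('a \<Rightarrow> 'a \<Rightarrow> complex) \<Rightarrow> ('a \<Rightarrow> 'a \<Rightarrow> complex) \<Rightarrow> bool" where
  "perp f g \<longleftrightarrow> (\<forall>u v w z. g u v * f z w - g u w * f z v + g v w * f z u = 0)"

definition prodZ :: "(int \<Rightarrow> complex) \<Rightarrow> int \<Rightarrow> int \<Rightarrow> complex" where
  "prodZ A k m =
     (if m \<ge> k then (\<Prod>j\<in>{k..m}. A j)
      else if m = k - 1 then 1
      else inverse (\<Prod>j\<in>{m+1..k-1}. A j))"

end

theory Submission
  imports Defs
begin

text \<open>Write \<open>P[A](k, l)\<close> for \<open>prodZ A k l\<close> and put \<open>c = g(b m, b (-n))\<close>. Orthogonality at
  \<open>(u, v, w, z) = (b k, b m, b (-n), a k)\<close> gives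
  \<open>c f(a k, b k) = g(b k, b (-n)) f(a k, b m) - g(b k, b m) f(a k, b (-n))\<close>, which makes the
  \<open>k\<close>-th summand equal to \<open>(W k - W (k + 1)) / c\<close> for the ratio of products
  \<open>W k = P[g(b _, b m)](m, k - 1) / P[f(a _, b m)](m, k - 1) \<cdot> P[f(a _, b (-n))](1, k - 1) / P[g(b _, b (-n))](1, k - 1)\<close>.
  The sum telescopes to \<open>(W (-n) - W (m + 1)) / c\<close>, and both ends vanish because \<open>g\<close> is zero
  on the diagonal: \<open>W (m + 1)\<close> has the numerator factor \<open>g(b m, b m)\<close>, and \<open>W (-n)\<close> divides by the
  reciprocal of a product containing \<open>g(b (-n), b (-n))\<close>, i.e. multiplies by that product.\<close>

lemma prodZ_last:
  assumes "A m \<noteq> 0 \<or> k \<le> m"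
  shows "prodZ A k m = prodZ A k (m - 1) * A m"
proof -
  consider "k \<le> m" | "m = k - 1" | "m \<le> k - 2" by linarith
  then show ?thesis
  proof cases
    case 1
    then have "{k..m} = insert m {k..m - 1}" by auto
    with 1 show ?thesis by (cases "m = k") (simp_all add: prodZ_def mult.commute)
  next
    case 2
    with assms show ?thesis by (simp add: prodZ_def)
  next
    case 3
    then have "{m..k - 1} = insert m {m + 1..k - 1}" by auto
    with 3 assms show ?thesis by (simp add: prodZ_def nonzero_inverse_mult_distrib)
  qed
qed

lemma prodZ_eq_0:
  assumes "A j = 0" and "k \<le> j \<and> j \<le> m \<or> m < j \<and> j < k"
  shows "prodZ A k m = 0"
  using assms by (auto simp: prodZ_def intro!: prod_zero bexI[of _ j])

lemma sum_int_telescope: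
  fixes U :: "int \<Rightarrow> 'b :: ab_group_add"
  assumes "a \<le> b + 1"
  shows "(\<Sum>k\<in>{a..b}. U k - U (k + 1)) = U a - U (b + 1)"
proof -
  from assms have "a - 1 \<le> b" by simp
  then show ?thesis
  proof (induction b rule: int_ge_induct)
    case base
    then show ?case by simp
  next
    case (step b)
    then have "{a..b + 1} = insert (b + 1) {a..b}" by auto
    with step show ?case by simp
  qed
qed

lemma summand_eq_prodZ_difference:
  fixes F G H K :: "int \<Rightarrow> complex" and p q :: int
  defines "W \<equiv> \<lambda>k. prodZ G p (k - 1) / prodZ F p (k - 1) * (prodZ H q (k - 1) / prodZ K q (k - 1))"
  assumes c: "c \<noteq> 0" and x: "c * x = K k * F k - G k * H k" and F: "F k \<noteq> 0"
    and G: "G k \<noteq> 0 \<or> p \<le> k" and H: "H k \<noteq> 0 \<or> q \<le> k"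
    and K: "K k = 0 \<Longrightarrow> prodZ K q (k - 1) = 0"
  shows "x * (prodZ G p (k - 1) / prodZ F p k) * (prodZ H q (k - 1) / prodZ K q k) = (W k - W (k + 1)) / c"
proof -
  have F_last: "prodZ F p k = prodZ F p (k - 1) * F k"
    using F by (intro prodZ_last) simp
  have W_next: "W (k + 1) = prodZ G p (k - 1) * G k / (prodZ F p (k - 1) * F k)
      * (prodZ H q (k - 1) * H k / prodZ K q k)"
    using F_last prodZ_last[of G k p] prodZ_last[of H k q] G H by (simp add: W_def)
  show ?thesis
  proof (cases "K k = 0")
    case True
    have W_k: "W k = 0"
      using K True by (simp add: W_def)
    have x_eq: "x = - G k * H k / c"
      using x c True by (simp add: field_simps)
    show ?thesis
      unfolding W_k W_next F_last x_eq using c F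
      by (cases "prodZ F p (k - 1) = 0"; cases "prodZ K q k = 0"; simp add: field_simps)
  next
    case False
    have K_last: "prodZ K q k = prodZ K q (k - 1) * K k"
      using False by (simp add: prodZ_last)
    have x_eq: "x = (K k * F k - G k * H k) / c"
      using x c by (simp add: field_simps)
    have W_k: "W k = prodZ G p (k - 1) / prodZ F p (k - 1) * (prodZ H q (k - 1) / prodZ K q (k - 1))"
      by (simp add: W_def)
    show ?thesis
      unfolding W_k W_next F_last K_last x_eq using c F False
      by (cases "prodZ F p (k - 1) = 0"; cases "prodZ K q (k - 1) = 0"; simp add: field_simps)
  qed
qed

lemma sum_prodZ_ratio_telescopes_to_0:
  fixes F G H K x :: "int \<Rightarrow> complex" and p q r s :: int
  assumes "r \<le> s + 1" and "c \<noteq> 0"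
    and "\<And>k. r \<le> k \<Longrightarrow> k \<le> s \<Longrightarrow> c * x k = K k * F k - G k * H k"
    and "\<And>k. r \<le> k \<Longrightarrow> k \<le> s \<Longrightarrow> F k \<noteq> 0"
    and "\<And>k. r \<le> k \<Longrightarrow> k \<le> s \<Longrightarrow> G k \<noteq> 0 \<or> p \<le> k"
    and "\<And>k. r \<le> k \<Longrightarrow> k \<le> s \<Longrightarrow> H k \<noteq> 0 \<or> q \<le> k"
    and "\<And>k. r \<le> k \<Longrightarrow> k \<le> s \<Longrightarrow> K k = 0 \<Longrightarrow> prodZ K q (k - 1) = 0"
    and G_end: "prodZ G p s = 0" and K_start: "prodZ K q (r - 1) = 0"
  shows "(\<Sum>k\<in>{r..s}. x k * (prodZ G p (k - 1) / prodZ F p k) * (prodZ H q (k - 1) / prodZ K q k)) = 0"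
proof -
  define W where "W k = prodZ G p (k - 1) / prodZ F p (k - 1) * (prodZ H q (k - 1) / prodZ K q (k - 1))" for k
  have "(\<Sum>k\<in>{r..s}. x k * (prodZ G p (k - 1) / prodZ F p k) * (prodZ H q (k - 1) / prodZ K q k))
      = (\<Sum>k\<in>{r..s}. (W k - W (k + 1)) / c)"
    unfolding W_def using assms by (intro sum.cong refl summand_eq_prodZ_difference) auto
  also have "\<dots> = (W r - W (s + 1)) / c"
    using assms(1) by (simp add: sum_divide_distrib[symmetric] sum_int_telescope)
  also have "\<dots> = 0"
    by (simp add: W_def G_end K_start)
  finally show ?thesis .
qed

theorem theorem4p1:
  fixes f g :: "'a \<Rightarrow> 'a \<Rightarrow> complex"
    and a b :: "int \<Rightarrow> 'a"
    and m n :: int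
  assumes fg: "perp f g"
    and g_anti: "\<And>x y. g x y = - g y x"
    and m_ge: "m \<ge> 0" and n_ge: "n \<ge> 1"
    and nz1: "\<And>j. -n \<le> j \<Longrightarrow> j \<le> m \<Longrightarrow> f (a j) (b m) \<noteq> 0"
    and nz2: "\<And>j. -n \<le> j \<Longrightarrow> j \<le> m \<Longrightarrow> j \<noteq> m \<Longrightarrow> g (b j) (b m) \<noteq> 0"
    and nz3: "\<And>j. -n \<le> j \<Longrightarrow> j \<le> m \<Longrightarrow> f (a j) (b (-n)) \<noteq> 0"
    and nz4: "\<And>j. -n \<le> j \<Longrightarrow> j \<le> m \<Longrightarrow> j \<noteq> -n \<Longrightarrow> g (b j) (b (-n)) \<noteq> 0"
  shows "(\<Sum>k\<in>{-n..m}. f (a k) (b k)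
            * (prodZ (\<lambda>j. g (b j) (b m)) m (k - 1) / prodZ (\<lambda>j. f (a j) (b m)) m k)
            * (prodZ (\<lambda>j. f (a j) (b (-n))) 1 (k - 1) / prodZ (\<lambda>j. g (b j) (b (-n))) 1 k)) = 0"
proof -
  have g_diag: "g x x = 0" for x
    using g_anti[of x x] by simp
  have perp_instance: "g (b m) (b (-n)) * f (a k) (b k)
      = g (b k) (b (-n)) * f (a k) (b m) - g (b k) (b m) * f (a k) (b (-n))" for k
  proof -
    have "g (b k) (b m) * f (a k) (b (-n)) - g (b k) (b (-n)) * f (a k) (b m)
        + g (b m) (b (-n)) * f (a k) (b k) = 0"
      using fg unfolding perp_def by blast
    then show ?thesis
      by (simp add: algebra_simps)
  qed
  have Gn_start: "prodZ (\<lambda>j. g (b j) (b (-n))) 1 (-n - 1) = 0"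
    using n_ge by (intro prodZ_eq_0[of _ "-n"]) (simp_all add: g_diag)
  show ?thesis
  proof (rule sum_prodZ_ratio_telescopes_to_0)
    show "g (b m) (b (-n)) \<noteq> 0"
      using nz2[of "-n"] g_anti[of "b (-n)" "b m"] m_ge n_ge by auto
    show "prodZ (\<lambda>j. g (b j) (b m)) m m = 0"
      by (intro prodZ_eq_0[of _ m]) (simp_all add: g_diag)
    show "prodZ (\<lambda>j. g (b j) (b (-n))) 1 (k - 1) = 0"
      if "-n \<le> k" "k \<le> m" "g (b k) (b (-n)) = 0" for k
      using that nz4[of k] Gn_start by fastforce
  qed (use perp_instance Gn_start m_ge n_ge nz1 nz2 nz3 in auto)
qed

end
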